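(* Consider a run of the algorithm CTG (defined in the context) in which the event $\mathcal{E}_2$ (defined in the context) holds. Then for every call CS$(w,\epsilon,\delta,S,s)$ made during the run and every $t\le N_2$ such that $C_t\le\phi(S,s)$, where $\phi(S,s)=\frac{\epsilon+|w-\Delta f(S,s)|}{2}$, the call terminates after at most $t$ samples.
   Context: Let $U$ be a finite ground set with $|U|=n$, and let $f:2^U\to\mathbb{R}_{\geq 0}$ be monotone and submodular. For $X\subseteq U$, $u\in U$, write $\Delta f(X,u)=f(X\cup\{u\})-f(X)$. Let $\kappa$ be a positive integer. There is no value oracle for $f$; instead, for any $X\subseteq U$, $u\in U$, one can draw independent samples from a distribution $\mathcal{D}(X,u)$ with $\mathbb{E}[\mathcal{D}(X,u)]=\Delta f(X,u)$ and all samples lying in $[0,R]$; all samples drawn are independent. Logarithms are natural; $h(\alpha)=\log(\kappa/\alpha)/\alpha$. For a call of CS on $(S,u)$, regard its samples as initial terms of an infinite i.i.d. sequence from $\mathcal{D}(S,u)$ and let $\widehat{\Delta f_t}(S,u)$ be the average of the first $t$ terms. Procedure CS$(w,\epsilon,\delta,S,u)$: let $N_2=R^2\log(6nh(\alpha)/\delta)/(2\epsilon^2)$. For $t=1,2,\dots,N_2$: draw the $t$-th sample, update $\widehat{\Delta f_t}(S,u)$, set $C_t=R\sqrt{\log(12nh(\alpha)t^2/\delta)/(2t)}$; if $\widehat{\Delta f_t}(S,u)-C_t\ge w-\epsilon$ return true; else if $\widehat{\Delta f_t}(S,u)+C_t\le w+\epsilon$ return false. If the loop completes, return true iff $\widehat{\Delta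 f_{N_2}}(S,u)\ge w$. Algorithm CTG$(\epsilon,\delta,\alpha)$ with $\epsilon,\delta,\alpha\in(0,1)$: let $N_1=R^2\log(6n/\delta)/(2\epsilon^2)$. For each $s\in U$ let $\hat f(s)$ be the mean of $N_1$ samples from $\mathcal{D}(\emptyset,s)$, and let $d=\max_{s\in U}\hat f(s)$. Set $w\gets d$, $S\gets\emptyset$. While $w>\alpha d/\kappa$: for each $u\in U$ in turn, if $|S|<\kappa$, call CS$(w,\epsilon,\delta,S,u)$ and if it returns true set $S\gets S\cup\{u\}$; after the pass set $w\gets w(1-\alpha)$. Return $S$. Event $\mathcal{E}_2$: for every call of CS on a pair $(S,u)$ and every $t\in\mathbb{N}_+$, $|\widehat{\Delta f_t}(S,u)-\Delta f(S,u)|\le C_t$. *)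

theory Defs
  imports Complex_Main
begin

definition monotone_on_subsets :: "'a set \<Rightarrow> ('a set \<Rightarrow> real) \<Rightarrow> bool" where
  "monotone_on_subsets U f \<longleftrightarrow> (\<forall>A B. A \<subseteq> B \<and> B \<subseteq> U \<longrightarrow> f A \<le> f B)"

definition submodular_on :: "'a set \<Rightarrow> ('a set \<Rightarrow> real) \<Rightarrow> bool" where
  "submodular_on U f \<longleftrightarrow>
     (\<forall>A B. A \<subseteq> U \<and> B \<subseteq> U \<longrightarrow> f (A \<union> B) + f (A \<inter> B) \<le> f A + f B)"

definition marg :: "('a set \<Rightarrow> real) \<Rightarrow> 'a set \<Rightarrow> 'a \<Rightarrow> real" where
  "marg f X u = f (insert u X) - f X"

definition hfun :: "nat \<Rightarrow> real \<Rightarrow> real" where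
  "hfun \<kappa> \<alpha> = ln (real \<kappa> / \<alpha>) / \<alpha>"

text \<open>N_2 = R^2 log(6 n h(alpha)/delta) / (2 eps^2) (a real number; the loop of CS
  runs over the positive integers t with t \<le> N_2).\<close>
definition N2 :: "real \<Rightarrow> nat \<Rightarrow> nat \<Rightarrow> real \<Rightarrow> real \<Rightarrow> real \<Rightarrow> real" where
  "N2 R n \<kappa> \<alpha> \<epsilon> \<delta> = R\<^sup>2 * ln (6 * real n * hfun \<kappa> \<alpha> / \<delta>) / (2 * \<epsilon>\<^sup>2)"

definition Cbound :: "real \<Rightarrow> nat \<Rightarrow> nat \<Rightarrow> real \<Rightarrow> real \<Rightarrow> nat \<Rightarrow> real" where
  "Cbound R n \<kappa> \<alpha> \<delta> t = R * sqrt (ln (12 * real n * hfun \<kappa> \<alpha> * (real t)\<^sup>2 / \<delta>) / (2 * real t))"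

definition avg :: "(nat \<Rightarrow> real) \<Rightarrow> nat \<Rightarrow> real" where
  "avg x t = (\<Sum>i<t. x i) / real t"

text \<open>The early-exit test of CS at step t (either the "return true" or the
  "return false" branch fires).\<close>
definition cs_exit :: "(nat \<Rightarrow> real) \<Rightarrow> (nat \<Rightarrow> real) \<Rightarrow> real \<Rightarrow> real \<Rightarrow> nat \<Rightarrow> bool" where
  "cs_exit x C w \<epsilon> t \<longleftrightarrow> avg x t - C t \<ge> w - \<epsilon> \<or> avg x t + C t \<le> w + \<epsilon>"

text \<open>Number of samples drawn by CS(w,eps,delta,S,u) when its samples are the initial
  terms of the sequence x (x 0 is the first sample): the first t \<ge> 1 with t \<le> N_2 at
  which the exit test fires, or the full loop length floor(N_2) if none fires.\<close>
definition cs_samples :: "(nat \<Rightarrow> real) \<Rightarrow> (nat \<Rightarrow> real) \<Rightarrow> real \<Rightarrow> real \<Rightarrow> real \<Rightarrow> nat" where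
  "cs_samples x C w \<epsilon> N =
     (if \<exists>t. 1 \<le> t \<and> real t \<le> N \<and> cs_exit x C w \<epsilon> t
      then (LEAST t. 1 \<le> t \<and> real t \<le> N \<and> cs_exit x C w \<epsilon> t)
      else nat \<lfloor>N\<rfloor>)"

end

theory Submission
  imports Defs
begin

text \<open>If the confidence radius is at most half of \<open>\<epsilon> + \<bar>w - m\<bar>\<close>, then the interval
  \<open>[avg - C, avg + C]\<close>, which contains the true mean \<open>m\<close>, has width at most
  \<open>\<epsilon> + \<bar>w - m\<bar>\<close>; hence it lies above \<open>w - \<epsilon>\<close> when \<open>m \<ge> w\<close> and below \<open>w + \<epsilon>\<close> otherwise.\<close>

lemma cs_exit_if_radius_small:
  assumes close: "\<bar>avg x t - m\<bar> \<le> C t"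
    and small: "C t \<le> (\<epsilon> + \<bar>w - m\<bar>) / 2"
  shows "cs_exit x C w \<epsilon> t"
proof (cases "w \<le> m")
  case True
  then have "\<bar>w - m\<bar> = m - w" by simp
  then have "avg x t - C t \<ge> w - \<epsilon>" using close small by (simp add: abs_le_iff)
  then show ?thesis unfolding cs_exit_def by blast
next
  case False
  then have "\<bar>w - m\<bar> = w - m" by simp
  then have "avg x t + C t \<le> w + \<epsilon>" using close small by (simp add: abs_le_iff)
  then show ?thesis unfolding cs_exit_def by blast
qed

lemma cs_samples_le_exit_step:
  assumes "1 \<le> t" "real t \<le> N" "cs_exit x C w \<epsilon> t"
  shows "cs_samples x C w \<epsilon> N \<le> t"
proof -
  let ?P = "\<lambda>t. 1 \<le> t \<and> real t \<le> N \<and> cs_exit x C w \<epsilon> t"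
  have "?P t" using assms by blast
  then show ?thesis
    unfolding cs_samples_def using Least_le[of ?P t] by auto
qed

theorem lemma6:
  fixes U :: "'a set" and f :: "'a set \<Rightarrow> real" and \<kappa> :: nat
    and R \<alpha> \<epsilon> \<delta> w :: real and S :: "'a set" and s :: 'a
    and x :: "nat \<Rightarrow> real"
  assumes "finite U"
    and "\<forall>X. X \<subseteq> U \<longrightarrow> f X \<ge> 0"
    and "monotone_on_subsets U f" and "submodular_on U f"
    and "\<kappa> > 0"
    and "0 < \<epsilon>" "\<epsilon> < 1" "0 < \<delta>" "\<delta> < 1" "0 < \<alpha>" "\<alpha> < 1"
    and "S \<subseteq> U" "s \<in> U" "card S < \<kappa>"
    and "\<forall>i. 0 \<le> x i \<and> x i \<le> R"
    and E2: "\<forall>t\<ge>1. \<bar>avg x t - marg f S s\<bar> \<le> Cbound R (card U) \<kappa> \<alpha> \<delta> t"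
  shows "\<forall>t. 1 \<le> t \<longrightarrow> real t \<le> N2 R (card U) \<kappa> \<alpha> \<epsilon> \<delta> \<longrightarrow>
           Cbound R (card U) \<kappa> \<alpha> \<delta> t \<le> (\<epsilon> + \<bar>w - marg f S s\<bar>) / 2 \<longrightarrow>
           cs_samples x (Cbound R (card U) \<kappa> \<alpha> \<delta>) w \<epsilon> (N2 R (card U) \<kappa> \<alpha> \<epsilon> \<delta>) \<le> t"
proof (intro allI impI)
  fix t :: nat
  let ?C = "Cbound R (card U) \<kappa> \<alpha> \<delta>"
  assume t_pos: "1 \<le> t" and t_le_N2: "real t \<le> N2 R (card U) \<kappa> \<alpha> \<epsilon> \<delta>"
    and radius_small: "?C t \<le> (\<epsilon> + \<bar>w - marg f S s\<bar>) / 2"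
  have "\<bar>avg x t - marg f S s\<bar> \<le> ?C t" using E2 t_pos by blast
  then have "cs_exit x ?C w \<epsilon> t" using radius_small by (rule cs_exit_if_radius_small)
  with t_pos t_le_N2 show "cs_samples x ?C w \<epsilon> (N2 R (card U) \<kappa> \<alpha> \<epsilon> \<delta>) \<le> t"
    by (rule cs_samples_le_exit_step)
qed

end
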